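(* Let $\mathcal{H}=([n],E=\{e_1,\dots,e_m\})$ be a 3-uniform hypergraph with $n$ vertices and $m=cn$ hyperedges. Suppose $\mathcal{H}$ is $(\epsilon,100c)$-degree bounded and $(\beta,\gamma)$-asymmetric, where $\gamma\ge 200\epsilon$. Let $\mathcal{C}=\{C_1,\dots,C_m\}$ be an arbitrary 3XOR instance with $n$ variables and $m$ constraints based on $\mathcal{H}$ (i.e. $e_i$ is the set of indices of the three variables used by $C_i$). Set $\delta=\min\{\frac{1}{200},\frac{\gamma}{48},\frac{\epsilon}{95c}\}$. If $\mathrm{GI}(G_{\mathcal{C}},G_{\mathcal{C}^0})\ge 1-\delta$, then $\mathrm{val}(\mathcal{C})\ge 0.9-100(\epsilon+\beta)$.
   Context: A hypergraph is $(\epsilon,D)$-degree bounded if every set of an $\epsilon$ fraction of its vertices has average degree at most $D$ (degree = number of hyperedges containing the vertex). For a hypergraph $\mathcal{H}=(V,E)$ and a permutation $\pi$ of $V$, $\mathrm{AUT}(\mathcal{H};\pi)=|\{e\in E:\pi(e)\in E\}|/|E|$; $\mathcal{H}$ is $(\beta,\gamma)$-asymmetric if every permutation with at most a $(1-\beta)$ fraction of the vertices as fixed points has $\mathrm{AUT}(\mathcal{H};\pi)<1-\gamma$. 3XOR instance: equations $x_{j_1}+x_{j_2}+x_{j_3}=b$ over $\mathbb{Z}_2$; $\mathrm{val}(\mathcal{C})$ is the maximum fraction of equations satisfiable by an assignment; $\mathcal{C}^0$ sets all right-hand sides to $0$. Graph $G_{\mathcal{C}}$: for each variable $x$, two variable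 vertices $x\mapsto0,x\mapsto1$ joined by an edge; for each equation $C$ on $x_1,x_2,x_3$, four constraint vertices, one per satisfying assignment $(x_1\mapsto a_1,x_2\mapsto a_2,x_3\mapsto a_3)$, forming a clique, each adjacent to the variable vertices $x_i\mapsto a_i$; variable vertices shared, constraint vertices not. $\mathrm{GI}(G,H)=\max_\pi\frac{|\{e\in E(G):\pi(e)\in E(H)\}|}{\max\{|E(G)|,|E(H)|\}}$ over bijections $\pi$. *)

theory Defs
  imports Complex_Main "HOL-Library.FuncSet" "HOL-Combinatorics.Permutations"
begin

definition hdeg :: "nat set set \<Rightarrow> nat \<Rightarrow> nat" where
  "hdeg E v = card {ed \<in> E. v \<in> ed}"

text \<open>(eps,D)-degree bounded: every set of (at most) an eps fraction of the vertices
  has total degree at most D times eps|V| (i.e. average degree at most D once padded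
  to exactly an eps fraction).\<close>
definition degree_bounded :: "nat set \<Rightarrow> nat set set \<Rightarrow> real \<Rightarrow> real \<Rightarrow> bool" where
  "degree_bounded V E eps D \<longleftrightarrow>
     (\<forall>S \<subseteq> V. real (card S) \<le> eps * real (card V) \<longrightarrow>
        (\<Sum>v\<in>S. real (hdeg E v)) \<le> D * (eps * real (card V)))"

definition AUT :: "nat set set \<Rightarrow> (nat \<Rightarrow> nat) \<Rightarrow> real" where
  "AUT E \<pi> = real (card {ed \<in> E. \<pi> ` ed \<in> E}) / real (card E)"

definition asymmetric :: "nat set \<Rightarrow> nat set set \<Rightarrow> real \<Rightarrow> real \<Rightarrow> bool" where
  "asymmetric V E \<beta> \<gamma> \<longleftrightarrow>
     (\<forall>\<pi>. \<pi> permutes V \<and> real (card {x \<in> V. \<pi> x = x}) \<le> (1 - \<beta>) * real (card V)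
        \<longrightarrow> AUT E \<pi> < 1 - \<gamma>)"

text \<open>Constraint i is the equation  sum_{j in e i} x_j = b i  over Z_2,
  with booleans encoding Z_2 (True = 1).\<close>
definition xor_sat :: "(nat \<Rightarrow> nat set) \<Rightarrow> (nat \<Rightarrow> bool) \<Rightarrow> (nat \<Rightarrow> bool) \<Rightarrow> nat \<Rightarrow> bool" where
  "xor_sat e b a i \<longleftrightarrow> (odd (card {j \<in> e i. a j}) \<longleftrightarrow> b i)"

definition xor_val :: "nat \<Rightarrow> nat \<Rightarrow> (nat \<Rightarrow> nat set) \<Rightarrow> (nat \<Rightarrow> bool) \<Rightarrow> real" where
  "xor_val n m e b =
     Max ((\<lambda>a. real (card {i \<in> {..<m}. xor_sat e b a i}) / real m) ` ({..<n} \<rightarrow>\<^sub>E (UNIV :: bool set)))"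

text \<open>VarV x v is the variable vertex (x |-> v); ConV i T is the constraint vertex of
  constraint i for the local assignment setting exactly the variables in T (a subset of e i) to 1.\<close>
datatype vtx = VarV nat bool | ConV nat "nat set"

definition local_sat :: "(nat \<Rightarrow> nat set) \<Rightarrow> (nat \<Rightarrow> bool) \<Rightarrow> nat \<Rightarrow> nat set \<Rightarrow> bool" where
  "local_sat e b i T \<longleftrightarrow> T \<subseteq> e i \<and> (odd (card T) \<longleftrightarrow> b i)"

definition GC_V :: "nat \<Rightarrow> nat \<Rightarrow> (nat \<Rightarrow> nat set) \<Rightarrow> (nat \<Rightarrow> bool) \<Rightarrow> vtx set" where
  "GC_V n m e b = {VarV x v | x v. x < n} \<union> {ConV i T | i T. i < m \<and> local_sat e b i T}"

definition GC_E :: "nat \<Rightarrow> nat \<Rightarrow> (nat \<Rightarrow> nat set) \<Rightarrow> (nat \<Rightarrow> bool) \<Rightarrow> vtx set set" where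
  "GC_E n m e b =
     {{VarV x False, VarV x True} | x. x < n}
   \<union> {{ConV i T, ConV i T'} | i T T'. i < m \<and> local_sat e b i T \<and> local_sat e b i T' \<and> T \<noteq> T'}
   \<union> {{ConV i T, VarV j (j \<in> T)} | i T j. i < m \<and> local_sat e b i T \<and> j \<in> e i}"

definition GI :: "vtx set \<Rightarrow> vtx set set \<Rightarrow> vtx set \<Rightarrow> vtx set set \<Rightarrow> real" where
  "GI V1 E1 V2 E2 =
     Max ((\<lambda>\<pi>. real (card {ed \<in> E1. \<pi> ` ed \<in> E2}) / real (max (card E1) (card E2)))
          ` {\<pi> \<in> V1 \<rightarrow>\<^sub>E V2. bij_betw \<pi> V1 V2})"

end

theory Submission
  imports Defs "HOL-Combinatorics.Cycles"
begin

text \<open>Take a bijection \<pi> attaining GI \<ge> 1 - \<delta>. If \<pi> preserves every edge at constraint i, then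
  C_i is satisfied by the assignment read off from the images of the vertices x \<mapsto> 0: the four
  vertices of C_i form a 4-clique, every 4-clique of the graph of C^0 is the clique of a single
  constraint k, so \<pi> carries the variables of C_i bijectively onto those of C_k, and the
  parity of the local assignments is transported from b_i to 0. Every edge meets at most one
  constraint, so at most \<delta>(n + 18m) constraints are violated. Finally, asymmetry forces
  n \<le> 4m: otherwise there are at least two isolated vertices, and cycling them is an automorphism
  fixing too few vertices.\<close>

section \<open>Subsets of a triple with prescribed parity\<close>

definition parity_subsets :: "nat set \<Rightarrow> bool \<Rightarrow> nat set set" where
  "parity_subsets E p = {T. T \<subseteq> E \<and> (odd (card T) \<longleftrightarrow> p)}"

lemma finite_parity_subsets: "finite E \<Longrightarrow> finite (parity_subsets E p)"
  unfolding parity_subsets_def by (rule finite_subset[of _ "Pow E"]) auto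

lemma parity_subsets_triple:
  assumes "x \<noteq> y" "y \<noteq> z" "x \<noteq> z"
  shows "parity_subsets {x,y,z} p =
    (if p then {{x},{y},{z},{x,y,z}} else {{},{x,y},{x,z},{y,z}})"
proof -
  have pow: "Pow {x,y,z} = {{},{x},{y},{z},{x,y},{x,z},{y,z},{x,y,z}}"
    by (auto simp: Pow_insert)
  have "parity_subsets {x,y,z} p = {T \<in> Pow {x,y,z}. odd (card T) \<longleftrightarrow> p}"
    unfolding parity_subsets_def by auto
  also have "\<dots> = (if p then {{x},{y},{z},{x,y,z}} else {{},{x,y},{x,z},{y,z}})"
    unfolding pow using assms by auto
  finally show ?thesis .
qed

lemma card_3_obtain_with:
  assumes "card E = 3" "j \<in> E"
  obtains y z where "E = {j,y,z}" "j \<noteq> y" "y \<noteq> z" "j \<noteq> z"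
proof -
  have "card (E - {j}) = 2" using assms by (simp add: card_Diff_singleton)
  then obtain y z where "E - {j} = {y,z}" "y \<noteq> z" by (auto simp: card_2_iff)
  moreover from this assms(2) have "E = {j,y,z}" "j \<noteq> y" "j \<noteq> z" by auto
  ultimately show ?thesis using that by blast
qed

lemma card_parity_subsets:
  assumes "card E = 3"
  shows "card (parity_subsets E p) = 4"
proof -
  obtain x y z where E: "E = {x,y,z}" "x \<noteq> y" "y \<noteq> z" "x \<noteq> z"
    using assms card_3_iff by metis
  show ?thesis unfolding E(1) parity_subsets_triple[OF E(2-4)] using E(2-4)
    by (auto simp: doubleton_eq_iff insert_commute)
qed

lemma card_parity_subsets_mem:
  assumes "card E = 3" "j \<in> E"
  shows "card {T \<in> parity_subsets E p. (j \<in> T) = v} = 2"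
proof -
  obtain y z where E: "E = {j,y,z}" "j \<noteq> y" "y \<noteq> z" "j \<noteq> z"
    using card_3_obtain_with[OF assms] by blast
  have "{T \<in> parity_subsets E p. (j \<in> T) = v} =
      (if p then (if v then {{j},{j,y,z}} else {{y},{z}})
       else (if v then {{j,y},{j,z}} else {{},{y,z}}))"
    unfolding E(1) parity_subsets_triple[OF E(2-4)] using E(2-4) by auto
  then show ?thesis using E(2-4) by (auto simp: doubleton_eq_iff)
qed

lemma even_subsets_mem_inj:
  assumes E: "card E = 3" "s \<in> E" "s' \<in> E"
    and eq: "{T \<in> parity_subsets E False. (s \<in> T) = t} = {T \<in> parity_subsets E False. (s' \<in> T) = t'}"
  shows "s = s' \<and> t = t'"
proof (cases "s = s'")
  case True
  have "{T \<in> parity_subsets E False. (s \<in> T) = t} \<noteq> {}"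
    using card_parity_subsets_mem[OF E(1,2)] by (metis card.empty zero_neq_numeral)
  with eq True show ?thesis by auto
next
  case False
  obtain y z where yz: "E = {s,y,z}" "s \<noteq> y" "y \<noteq> z" "s \<noteq> z"
    using card_3_obtain_with[OF E(1,2)] by blast
  with False E(3) have "s' = y \<or> s' = z" by auto
  with yz obtain z' where E': "E = {s,s',z'}" "s \<noteq> s'" "s' \<noteq> z'" "s \<noteq> z'"
    by (metis insert_commute)
  have "{T \<in> parity_subsets E False. (s \<in> T) = t} = (if t then {{s,s'},{s,z'}} else {{},{s',z'}})"
    "{T \<in> parity_subsets E False. (s' \<in> T) = t'} = (if t' then {{s,s'},{s',z'}} else {{},{s,z'}})"
    unfolding E'(1) parity_subsets_triple[OF E'(2-4)] using E'(2-4) by auto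
  with eq E'(2-4) show ?thesis
    by (cases t; cases t'; auto simp: doubleton_eq_iff)
qed

lemma odd_card_disagreements:
  assumes "finite E" "T \<subseteq> E"
  shows "odd (card {j \<in> E. (j \<in> T) \<noteq> a j}) \<longleftrightarrow> (odd (card T) \<noteq> odd (card {j \<in> E. a j}))"
proof -
  define A where "A = {j \<in> E. a j}"
  have fin: "finite A" "finite T" using assms A_def finite_subset by auto
  have "{j \<in> E. (j \<in> T) \<noteq> a j} = (T - A) \<union> (A - T)" using assms(2) unfolding A_def by auto
  moreover have "card ((T - A) \<union> (A - T)) = card (T - A) + card (A - T)"
    by (rule card_Un_disjoint) (use fin in auto)
  moreover have "card T = card (T - A) + card (T \<inter> A)" "card A = card (A - T) + card (T \<inter> A)"
    using card_Int_Diff[OF fin(2), of A] card_Int_Diff[OF fin(1), of T] by (simp_all add: Int_commute)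
  ultimately show ?thesis unfolding A_def[symmetric] by presburger
qed

section \<open>The graph $G_{\mathcal{C}}$\<close>

lemma local_sat_iff: "local_sat e b i T \<longleftrightarrow> T \<in> parity_subsets (e i) (b i)"
  unfolding local_sat_def parity_subsets_def by auto

lemma VarV_in_GC_V: "x < n \<Longrightarrow> VarV x v \<in> GC_V n m e b"
  unfolding GC_V_def by auto

lemma ConV_in_GC_V: "i < m \<Longrightarrow> T \<in> parity_subsets (e i) (b i) \<Longrightarrow> ConV i T \<in> GC_V n m e b"
  unfolding GC_V_def local_sat_iff by auto

lemma GC_E_VarV_neighbour:
  assumes "{VarV x v, q} \<in> GC_E n m e b"
  shows "q = VarV x (\<not> v) \<or>
    (\<exists>k U. q = ConV k U \<and> k < m \<and> U \<in> parity_subsets (e k) (b k) \<and> x \<in> e k \<and> v = (x \<in> U))"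
  using assms unfolding GC_E_def Un_iff mem_Collect_eq local_sat_iff
  by (elim disjE exE conjE) (simp_all add: doubleton_eq_iff; blast)+

lemma GC_E_ConV_neighbour:
  assumes "{ConV k U, q} \<in> GC_E n m e b"
  shows "k < m \<and> U \<in> parity_subsets (e k) (b k) \<and>
    ((\<exists>U'. q = ConV k U' \<and> U' \<in> parity_subsets (e k) (b k) \<and> U' \<noteq> U) \<or>
     (\<exists>x. q = VarV x (x \<in> U) \<and> x \<in> e k))"
  using assms unfolding GC_E_def local_sat_iff by (auto simp: doubleton_eq_iff)

lemma GC_E_ConV_same_constraint:
  assumes "ed \<in> GC_E n m e b" "ConV i T \<in> ed" "ConV i' T' \<in> ed"
  shows "i = i'"
  using assms unfolding GC_E_def Un_iff mem_Collect_eq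
  by (elim disjE exE conjE; simp; blast)

lemma finite_hyperedge:
  fixes e :: "nat \<Rightarrow> nat set"
  assumes "\<forall>i<m. e i \<subseteq> {..<n} \<and> card (e i) = 3" "i < m"
  shows "finite (e i)"
proof -
  have "e i \<subseteq> {..<n}" using assms by blast
  then show ?thesis by (rule finite_subset) simp
qed

lemma GC_E_no_common_neighbour:
  assumes "{VarV x v, q} \<in> GC_E n m e b" "{VarV x (\<not> v), q} \<in> GC_E n m e b"
  shows False
  using GC_E_VarV_neighbour[OF assms(1)] GC_E_VarV_neighbour[OF assms(2)] by auto

lemma GC_clique_at_variable_card_le:
  assumes uniform: "\<forall>i<m. e i \<subseteq> {..<n} \<and> card (e i) = 3"
    and clique: "\<And>q q'. q \<in> R \<Longrightarrow> q' \<in> R \<Longrightarrow> q \<noteq> q' \<Longrightarrow> {q, q'} \<in> GC_E n m e b"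
    and at_x: "\<And>q. q \<in> R \<Longrightarrow>
      \<exists>k U. q = ConV k U \<and> k < m \<and> U \<in> parity_subsets (e k) (b k) \<and> x \<in> e k \<and> v = (x \<in> U)"
  shows "card R \<le> 2"
proof (cases "R = {}")
  case False
  then obtain q0 where q0: "q0 \<in> R" by blast
  with at_x obtain k U0 where k: "q0 = ConV k U0" "k < m" "x \<in> e k" by blast
  have "R \<subseteq> ConV k ` {U \<in> parity_subsets (e k) (b k). (x \<in> U) = v}"
  proof
    fix q assume q: "q \<in> R"
    with at_x obtain k' U where q': "q = ConV k' U" "U \<in> parity_subsets (e k') (b k')" "v = (x \<in> U)"
      by blast
    have "k' = k"
    proof (cases "q = q0")
      case False
      with q q0 have "{ConV k U0, q} \<in> GC_E n m e b" using clique k(1) by auto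
      with q'(1) show ?thesis using GC_E_ConV_neighbour by blast
    qed (use q' k in simp)
    with q' show "q \<in> ConV k ` {U \<in> parity_subsets (e k) (b k). (x \<in> U) = v}" by auto
  qed
  moreover have fin: "finite {U \<in> parity_subsets (e k) (b k). (x \<in> U) = v}"
    using finite_parity_subsets[OF finite_hyperedge[OF uniform k(2)]] by simp
  ultimately have "card R \<le> card (ConV k ` {U \<in> parity_subsets (e k) (b k). (x \<in> U) = v})"
    by (intro card_mono finite_imageI)
  also have "\<dots> \<le> card {U \<in> parity_subsets (e k) (b k). (x \<in> U) = v}"
    using fin by (rule card_image_le)
  also have "\<dots> = 2" using card_parity_subsets_mem uniform k by blast
  finally show ?thesis .
qed simp

lemma GC_clique_with_VarV_card_le:
  assumes uniform: "\<forall>i<m. e i \<subseteq> {..<n} \<and> card (e i) = 3"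
    and clique: "\<And>q q'. q \<in> K \<Longrightarrow> q' \<in> K \<Longrightarrow> q \<noteq> q' \<Longrightarrow> {q, q'} \<in> GC_E n m e b"
    and "finite K" and x: "VarV x v \<in> K"
  shows "card K \<le> 3"
proof -
  define R where "R = K - {VarV x v}"
  have neighbour: "{VarV x v, q} \<in> GC_E n m e b" if "q \<in> R" for q
    using clique x that unfolding R_def by auto
  have "card R \<le> 2"
  proof (cases "VarV x (\<not> v) \<in> R")
    case True
    have "q = VarV x (\<not> v)" if "q \<in> R" for q
    proof (rule ccontr)
      assume "q \<noteq> VarV x (\<not> v)"
      with True that have "{VarV x (\<not> v), q} \<in> GC_E n m e b"
        using clique unfolding R_def by auto
      with neighbour[OF that] show False by (rule GC_E_no_common_neighbour)
    qed
    then have "card R \<le> card {VarV x (\<not> v)}" by (intro card_mono) auto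
    then show ?thesis by simp
  next
    case False
    show ?thesis
    proof (rule GC_clique_at_variable_card_le[OF uniform])
      show "{q, q'} \<in> GC_E n m e b" if "q \<in> R" "q' \<in> R" "q \<noteq> q'" for q q'
        using clique that unfolding R_def by auto
      show "\<exists>k U. q = ConV k U \<and> k < m \<and> U \<in> parity_subsets (e k) (b k) \<and> x \<in> e k \<and> v = (x \<in> U)"
        if "q \<in> R" for q
        using GC_E_VarV_neighbour[OF neighbour[OF that]] False that by auto
    qed
  qed
  then show ?thesis using \<open>finite K\<close> x unfolding R_def by (simp add: card_Diff_singleton)
qed

lemma GC_4_clique:
  assumes uniform: "\<forall>i<m. e i \<subseteq> {..<n} \<and> card (e i) = 3"
    and clique: "\<And>q q'. q \<in> K \<Longrightarrow> q' \<in> K \<Longrightarrow> q \<noteq> q' \<Longrightarrow> {q, q'} \<in> GC_E n m e b"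
    and card_K: "card K = 4"
  obtains k where "k < m" "K = ConV k ` parity_subsets (e k) (b k)"
proof -
  have fin: "finite K" using card_K by (metis card.infinite zero_neq_numeral)
  have ConV: "\<exists>k U. q = ConV k U \<and> k < m \<and> U \<in> parity_subsets (e k) (b k)" if q: "q \<in> K" for q
  proof -
    have "card (K - {q}) = 3" using card_K q by (simp add: card_Diff_singleton)
    then obtain q' where "q' \<in> K - {q}" by (metis all_not_in_conv card.empty zero_neq_numeral)
    with q have edge: "{q, q'} \<in> GC_E n m e b" using clique by auto
    show ?thesis
    proof (cases q)
      case (VarV x v)
      then show ?thesis
        using GC_clique_with_VarV_card_le[OF uniform clique fin, of x v] q card_K by simp
    next
      case (ConV k U)
      then show ?thesis using GC_E_ConV_neighbour[of k U q'] edge by auto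
    qed
  qed
  obtain q0 where "q0 \<in> K" using card_K by (metis all_not_in_conv card.empty zero_neq_numeral)
  with ConV obtain k U0 where q0: "q0 \<in> K" "q0 = ConV k U0" "k < m" by blast
  have "finite (ConV k ` parity_subsets (e k) (b k))"
    using finite_parity_subsets[OF finite_hyperedge[OF uniform q0(3)]] by blast
  moreover have "K \<subseteq> ConV k ` parity_subsets (e k) (b k)"
  proof
    fix q assume q: "q \<in> K"
    with ConV obtain k' U where q': "q = ConV k' U" "U \<in> parity_subsets (e k') (b k')" by blast
    have "k' = k"
    proof (cases "q = q0")
      case False
      with q q0 have "{ConV k U0, q} \<in> GC_E n m e b" using clique by auto
      with q'(1) show ?thesis using GC_E_ConV_neighbour by blast
    qed (use q' q0 in simp)
    with q' show "q \<in> ConV k ` parity_subsets (e k) (b k)" by auto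
  qed
  moreover have "card (ConV k ` parity_subsets (e k) (b k)) = card K"
    using card_parity_subsets uniform q0(3) card_K by (subst card_image) (auto simp: inj_on_def)
  ultimately have "K = ConV k ` parity_subsets (e k) (b k)" by (intro card_subset_eq) simp_all
  with q0(3) show ?thesis by (rule that)
qed

section \<open>A constraint whose edges are all preserved is satisfied\<close>

definition var_index :: "vtx \<Rightarrow> nat" where
  "var_index u = (case u of VarV x _ \<Rightarrow> x | ConV _ _ \<Rightarrow> 0)"

definition var_value :: "vtx \<Rightarrow> bool" where
  "var_value u = (case u of VarV _ w \<Rightarrow> w | ConV _ _ \<Rightarrow> False)"

definition con_subset :: "vtx \<Rightarrow> nat set" where
  "con_subset u = (case u of ConV _ U \<Rightarrow> U | VarV _ _ \<Rightarrow> {})"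

definition constraint_preserved ::
    "nat \<Rightarrow> nat \<Rightarrow> (nat \<Rightarrow> nat set) \<Rightarrow> (nat \<Rightarrow> bool) \<Rightarrow> (vtx \<Rightarrow> vtx) \<Rightarrow> nat \<Rightarrow> bool" where
  "constraint_preserved n m e b \<pi> i \<longleftrightarrow>
     (\<forall>ed \<in> GC_E n m e b. (\<exists>T. ConV i T \<in> ed) \<longrightarrow> \<pi> ` ed \<in> GC_E n m e (\<lambda>_. False))"

locale preserved_constraint =
  fixes n m :: nat and e :: "nat \<Rightarrow> nat set" and b :: "nat \<Rightarrow> bool"
    and \<pi> :: "vtx \<Rightarrow> vtx" and i :: nat
  assumes uniform: "\<forall>i<m. e i \<subseteq> {..<n} \<and> card (e i) = 3"
    and inj: "inj_on \<pi> (GC_V n m e b)"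
    and i: "i < m"
    and preserved: "constraint_preserved n m e b \<pi> i"
begin

abbreviation S :: "nat set set" where
  "S \<equiv> parity_subsets (e i) (b i)"

lemma preserved_edge:
  "ed \<in> GC_E n m e b \<Longrightarrow> ConV i T \<in> ed \<Longrightarrow> \<pi> ` ed \<in> GC_E n m e (\<lambda>_. False)"
  using preserved unfolding constraint_preserved_def by blast

lemma clique_edge:
  assumes "T \<in> S" "T' \<in> S" "T \<noteq> T'"
  shows "{\<pi> (ConV i T), \<pi> (ConV i T')} \<in> GC_E n m e (\<lambda>_. False)"
proof -
  have "{ConV i T, ConV i T'} \<in> GC_E n m e b"
    unfolding GC_E_def local_sat_iff using assms i by blast
  from preserved_edge[OF this insertI1] show ?thesis by simp
qed

lemma incidence_edge:
  assumes "T \<in> S" "j \<in> e i"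
  shows "{\<pi> (ConV i T), \<pi> (VarV j (j \<in> T))} \<in> GC_E n m e (\<lambda>_. False)"
proof -
  have "{ConV i T, VarV j (j \<in> T)} \<in> GC_E n m e b"
    unfolding GC_E_def local_sat_iff using assms i by blast
  from preserved_edge[OF this insertI1] show ?thesis by simp
qed

lemma inj_ConV: "inj_on (\<lambda>T. \<pi> (ConV i T)) S"
proof
  fix T T' assume "T \<in> S" "T' \<in> S" "\<pi> (ConV i T) = \<pi> (ConV i T')"
  with inj show "T = T'" using ConV_in_GC_V[OF i] by (auto dest: inj_onD)
qed

lemma image_constraint_clique:
  obtains k where "k < m" "(\<lambda>T. \<pi> (ConV i T)) ` S = ConV k ` parity_subsets (e k) False"
proof (rule GC_4_clique[OF uniform])
  have "card (e i) = 3" using uniform i by blast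
  then show "card ((\<lambda>T. \<pi> (ConV i T)) ` S) = 4"
    using card_image[OF inj_ConV] card_parity_subsets by simp
  show "{q, q'} \<in> GC_E n m e (\<lambda>_. False)"
    if "q \<in> (\<lambda>T. \<pi> (ConV i T)) ` S" "q' \<in> (\<lambda>T. \<pi> (ConV i T)) ` S" "q \<noteq> q'" for q q'
    using that clique_edge by blast
qed

end

locale preserved_constraint_target = preserved_constraint +
  fixes k :: nat
  assumes k: "k < m"
    and target: "(\<lambda>T. \<pi> (ConV i T)) ` S = ConV k ` parity_subsets (e k) False"
begin

abbreviation P :: "nat set set" where
  "P \<equiv> parity_subsets (e k) False"

definition f :: "nat set \<Rightarrow> nat set" where
  "f T = con_subset (\<pi> (ConV i T))"

lemma ConV_image:
  assumes "T \<in> S"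
  shows "\<pi> (ConV i T) = ConV k (f T)"
proof -
  from assms target obtain U where "\<pi> (ConV i T) = ConV k U" by blast
  then show ?thesis unfolding f_def con_subset_def by simp
qed

lemma f_bij: "bij_betw f S P"
  unfolding bij_betw_def
proof
  show "inj_on f S"
  proof
    fix T T' assume "T \<in> S" "T' \<in> S" "f T = f T'"
    then show "T = T'" using inj_onD[OF inj_ConV] ConV_image by metis
  qed
  have "f ` S = con_subset ` (\<lambda>T. \<pi> (ConV i T)) ` S"
    unfolding f_def by (simp add: image_image)
  also have "\<dots> = P"
    unfolding target image_image con_subset_def by simp
  finally show "f ` S = P" .
qed

lemma card_e: "card (e i) = 3" "card (e k) = 3"
  using uniform i k by blast+

lemma VarV_image_neighbour:
  assumes T: "T \<in> S" and j: "j \<in> e i"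
  shows "\<exists>s \<in> e k. \<pi> (VarV j (j \<in> T)) = VarV s (s \<in> f T)"
proof -
  have edge: "{ConV k (f T), \<pi> (VarV j (j \<in> T))} \<in> GC_E n m e (\<lambda>_. False)"
    using incidence_edge[OF T j] ConV_image[OF T] by simp
  have "\<pi> (VarV j (j \<in> T)) \<notin> ConV k ` P"
  proof
    assume "\<pi> (VarV j (j \<in> T)) \<in> ConV k ` P"
    then obtain T' where "T' \<in> S" "\<pi> (VarV j (j \<in> T)) = \<pi> (ConV i T')"
      unfolding target[symmetric] by blast
    moreover have "j < n" using uniform i j by blast
    ultimately have "VarV j (j \<in> T) = ConV i T'"
      using inj_onD[OF inj] VarV_in_GC_V ConV_in_GC_V[OF i] by blast
    then show False by simp
  qed
  then show ?thesis using GC_E_ConV_neighbour[OF edge] by auto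
qed

lemma VarV_image:
  fixes v :: bool
  assumes j: "j \<in> e i"
  defines "s \<equiv> var_index (\<pi> (VarV j v))" and "t \<equiv> var_value (\<pi> (VarV j v))"
  shows "\<pi> (VarV j v) = VarV s t" and "s \<in> e k"
    and "f ` {T \<in> S. (j \<in> T) = v} = {U \<in> P. (s \<in> U) = t}"
proof -
  have neighbour: "\<pi> (VarV j v) = VarV s t \<and> s \<in> e k \<and> t = (s \<in> f T)"
    if "T \<in> S" "(j \<in> T) = v" for T
    using VarV_image_neighbour[OF that(1) j] that(2) unfolding s_def t_def
    by (auto simp: var_index_def var_value_def)
  have card_N: "card {T \<in> S. (j \<in> T) = v} = 2"
    using card_parity_subsets_mem[OF card_e(1) j] .
  then obtain T where "T \<in> {T \<in> S. (j \<in> T) = v}"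
    by (metis all_not_in_conv card.empty zero_neq_numeral)
  with neighbour show "\<pi> (VarV j v) = VarV s t" "s \<in> e k" by blast+
  show "f ` {T \<in> S. (j \<in> T) = v} = {U \<in> P. (s \<in> U) = t}"
  proof (rule card_subset_eq)
    show "finite {U \<in> P. (s \<in> U) = t}"
      using finite_parity_subsets[OF finite_hyperedge[OF uniform k]] by simp
    show "f ` {T \<in> S. (j \<in> T) = v} \<subseteq> {U \<in> P. (s \<in> U) = t}"
      using neighbour f_bij unfolding bij_betw_def by auto
    have "inj_on f {T \<in> S. (j \<in> T) = v}"
      using f_bij unfolding bij_betw_def by (blast intro: inj_on_subset)
    then have "card (f ` {T \<in> S. (j \<in> T) = v}) = 2"
      using card_N by (simp add: card_image)
    also have "\<dots> = card {U \<in> P. (s \<in> U) = t}"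
      using card_parity_subsets_mem[OF card_e(2) \<open>s \<in> e k\<close>] by simp
    finally show "card (f ` {T \<in> S. (j \<in> T) = v}) = card {U \<in> P. (s \<in> U) = t}" .
  qed
qed

lemma VarV_image_flip:
  assumes j: "j \<in> e i"
  shows "\<pi> (VarV j True) = VarV (var_index (\<pi> (VarV j False))) (\<not> var_value (\<pi> (VarV j False)))"
proof -
  define s0 where "s0 = var_index (\<pi> (VarV j False))"
  define t0 where "t0 = var_value (\<pi> (VarV j False))"
  define s1 where "s1 = var_index (\<pi> (VarV j True))"
  define t1 where "t1 = var_value (\<pi> (VarV j True))"
  have "{T \<in> S. (j \<in> T) = True} = S - {T \<in> S. (j \<in> T) = False}" by auto
  then have "f ` {T \<in> S. (j \<in> T) = True} = f ` S - f ` {T \<in> S. (j \<in> T) = False}"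
    using f_bij inj_on_image_set_diff[of f S S] unfolding bij_betw_def by auto
  then have "f ` {T \<in> S. (j \<in> T) = True} = P - f ` {T \<in> S. (j \<in> T) = False}"
    using f_bij unfolding bij_betw_def by simp
  then have "{U \<in> P. (s1 \<in> U) = t1} = P - {U \<in> P. (s0 \<in> U) = t0}"
    using VarV_image(3)[OF j, of True] VarV_image(3)[OF j, of False]
    unfolding s0_def t0_def s1_def t1_def by simp
  also have "\<dots> = {U \<in> P. (s0 \<in> U) = (\<not> t0)}" by auto
  finally have "s1 = s0 \<and> t1 = (\<not> t0)"
    unfolding s0_def s1_def
    by (rule even_subsets_mem_inj[OF card_e(2) VarV_image(2)[OF j] VarV_image(2)[OF j]])
  with VarV_image(1)[OF j, of True] show ?thesis unfolding s0_def t0_def s1_def t1_def by simp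
qed

definition assignment :: "nat \<Rightarrow> bool" where
  "assignment j = var_value (\<pi> (VarV j False))"

definition var_map :: "nat \<Rightarrow> nat" where
  "var_map j = var_index (\<pi> (VarV j False))"

lemma VarV_image_local:
  assumes "j \<in> e i"
  shows "\<pi> (VarV j (j \<in> T)) = VarV (var_map j) ((j \<in> T) \<noteq> assignment j)"
  using VarV_image(1)[OF assms, of False] VarV_image_flip[OF assms]
  unfolding assignment_def var_map_def by (cases "j \<in> T") simp_all

lemma var_map_mem:
  assumes "T \<in> S" "j \<in> e i"
  shows "var_map j \<in> e k" and "var_map j \<in> f T \<longleftrightarrow> (j \<in> T) \<noteq> assignment j"
  using VarV_image_neighbour[OF assms] VarV_image_local[OF assms(2), of T] by auto

lemma var_map_bij: "bij_betw var_map (e i) (e k)"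
proof -
  obtain T0 where T0: "T0 \<in> S"
    using card_parity_subsets[OF card_e(1)] by (metis all_not_in_conv card.empty zero_neq_numeral)
  have "inj_on var_map (e i)"
  proof
    fix j j' assume jj: "j \<in> e i" "j' \<in> e i" "var_map j = var_map j'"
    then have "((j \<in> T0) \<noteq> assignment j) = ((j' \<in> T0) \<noteq> assignment j')"
      using var_map_mem(2)[OF T0 jj(1)] var_map_mem(2)[OF T0 jj(2)] by simp
    with jj have "\<pi> (VarV j (j \<in> T0)) = \<pi> (VarV j' (j' \<in> T0))" using VarV_image_local by simp
    moreover have "j < n" "j' < n" using uniform i jj by blast+
    ultimately have "VarV j (j \<in> T0) = VarV j' (j' \<in> T0)"
      using inj_onD[OF inj] VarV_in_GC_V by blast
    then show "j = j'" by simp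
  qed
  moreover have "var_map ` e i = e k"
  proof (rule card_subset_eq)
    show "finite (e k)" by (rule finite_hyperedge[OF uniform k])
    show "var_map ` e i \<subseteq> e k" using var_map_mem(1)[OF T0] by blast
    show "card (var_map ` e i) = card (e k)" using card_image[OF \<open>inj_on var_map (e i)\<close>] card_e by simp
  qed
  ultimately show ?thesis unfolding bij_betw_def ..
qed

lemma f_eq_image_disagreements:
  assumes T: "T \<in> S"
  shows "f T = var_map ` {j \<in> e i. (j \<in> T) \<noteq> assignment j}"
proof
  have "f T \<subseteq> e k" using f_bij T unfolding bij_betw_def parity_subsets_def by blast
  show "f T \<subseteq> var_map ` {j \<in> e i. (j \<in> T) \<noteq> assignment j}"
  proof
    fix u assume "u \<in> f T"
    with \<open>f T \<subseteq> e k\<close> obtain j where "j \<in> e i" "u = var_map j"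
      using var_map_bij unfolding bij_betw_def by blast
    with \<open>u \<in> f T\<close> show "u \<in> var_map ` {j \<in> e i. (j \<in> T) \<noteq> assignment j}"
      using var_map_mem(2)[OF T] by auto
  qed
  show "var_map ` {j \<in> e i. (j \<in> T) \<noteq> assignment j} \<subseteq> f T"
    using var_map_mem(2)[OF T] by blast
qed

text \<open>Every local assignment T of constraint i disagrees with the global assignment on an
  even number of variables, because these are mapped bijectively onto the even set f T.\<close>

lemma constraint_satisfied: "xor_sat e b (\<lambda>j. var_value (\<pi> (VarV j False))) i"
proof -
  obtain T where T: "T \<in> S"
    using card_parity_subsets[OF card_e(1)] by (metis all_not_in_conv card.empty zero_neq_numeral)
  have "inj_on var_map (e i)" using var_map_bij by (rule bij_betw_imp_inj_on)
  then have "inj_on var_map {j \<in> e i. (j \<in> T) \<noteq> assignment j}" by (rule inj_on_subset) auto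
  then have "card (f T) = card {j \<in> e i. (j \<in> T) \<noteq> assignment j}"
    unfolding f_eq_image_disagreements[OF T] by (rule card_image)
  moreover have "even (card (f T))" "T \<subseteq> e i" "odd (card T) \<longleftrightarrow> b i"
    using f_bij T unfolding bij_betw_def parity_subsets_def by auto
  ultimately show ?thesis
    using odd_card_disagreements[OF finite_hyperedge[OF uniform i], of T assignment]
    unfolding xor_sat_def assignment_def by simp
qed

end

lemma preserved_constraint_satisfied:
  assumes "\<forall>i<m. e i \<subseteq> {..<n} \<and> card (e i) = 3" "inj_on \<pi> (GC_V n m e b)" "i < m"
    and "constraint_preserved n m e b \<pi> i"
  shows "xor_sat e b (\<lambda>j. var_value (\<pi> (VarV j False))) i"
proof -
  have local: "preserved_constraint n m e b \<pi> i"
    using assms by (rule preserved_constraint.intro)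
  then obtain k where "k < m"
    "(\<lambda>T. \<pi> (ConV i T)) ` parity_subsets (e i) (b i) = ConV k ` parity_subsets (e k) False"
    by (rule preserved_constraint.image_constraint_clique)
  then have "preserved_constraint_target n m e b \<pi> i k"
    by (intro preserved_constraint_target.intro[OF local] preserved_constraint_target_axioms.intro)
  then show ?thesis by (rule preserved_constraint_target.constraint_satisfied)
qed

section \<open>Size of $G_{\mathcal{C}}$ and the maximum defining GI\<close>

lemma finite_GC_V:
  assumes uniform: "\<forall>i<m. e i \<subseteq> {..<n} \<and> card (e i) = 3"
  shows "finite (GC_V n m e b)"
proof (rule finite_subset)
  show "GC_V n m e b \<subseteq> (\<lambda>(x,v). VarV x v) ` ({..<n} \<times> UNIV) \<union> (\<lambda>(i,T). ConV i T) ` (SIGMA i:{..<m}. Pow (e i))"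
    unfolding GC_V_def local_sat_def by auto
  show "finite ((\<lambda>(x,v). VarV x v) ` ({..<n} \<times> UNIV) \<union> (\<lambda>(i,T). ConV i T) ` (SIGMA i:{..<m}. Pow (e i)))"
    using finite_hyperedge[OF uniform] by (intro finite_UnI finite_imageI finite_SigmaI) auto
qed

definition clique_edges :: "(nat \<Rightarrow> nat set) \<Rightarrow> (nat \<Rightarrow> bool) \<Rightarrow> nat \<Rightarrow> vtx set set" where
  "clique_edges e b i = {X. X \<subseteq> ConV i ` parity_subsets (e i) (b i) \<and> card X = 2}"

definition incidence_edges :: "(nat \<Rightarrow> nat set) \<Rightarrow> (nat \<Rightarrow> bool) \<Rightarrow> nat \<Rightarrow> vtx set set" where
  "incidence_edges e b i =
     (\<lambda>(T, j). {ConV i T, VarV j (j \<in> T)}) ` (parity_subsets (e i) (b i) \<times> e i)"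

lemma GC_E_subset:
  "GC_E n m e b \<subseteq> (\<lambda>x. {VarV x False, VarV x True}) ` {..<n}
     \<union> (\<Union>i<m. clique_edges e b i) \<union> (\<Union>i<m. incidence_edges e b i)"
proof
  fix ed assume "ed \<in> GC_E n m e b"
  then consider (var) x where "x < n" "ed = {VarV x False, VarV x True}"
    | (clique) i T T' where "i < m" "T \<in> parity_subsets (e i) (b i)"
        "T' \<in> parity_subsets (e i) (b i)" "T \<noteq> T'" "ed = {ConV i T, ConV i T'}"
    | (incidence) i T j where "i < m" "T \<in> parity_subsets (e i) (b i)" "j \<in> e i"
        "ed = {ConV i T, VarV j (j \<in> T)}"
    unfolding GC_E_def Un_iff mem_Collect_eq local_sat_iff by (elim disjE exE conjE) blast+
  then show "ed \<in> (\<lambda>x. {VarV x False, VarV x True}) ` {..<n}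
     \<union> (\<Union>i<m. clique_edges e b i) \<union> (\<Union>i<m. incidence_edges e b i)"
  proof cases
    case clique
    then have "ed \<in> clique_edges e b i" unfolding clique_edges_def by auto
    with clique(1) show ?thesis by blast
  next
    case incidence
    then have "ed \<in> incidence_edges e b i"
      unfolding incidence_edges_def by (auto intro!: image_eqI[where x = "(T, j)"])
    with incidence(1) show ?thesis by blast
  qed auto
qed

lemma clique_edges_finite_card:
  assumes uniform: "\<forall>i<m. e i \<subseteq> {..<n} \<and> card (e i) = 3" and "i < m"
  shows "finite (clique_edges e b i) \<and> card (clique_edges e b i) = 6"
proof -
  have fin: "finite (ConV i ` parity_subsets (e i) (b i))"
    using finite_parity_subsets[OF finite_hyperedge[OF assms]] by simp
  have "card (ConV i ` parity_subsets (e i) (b i)) = 4"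
    using card_parity_subsets uniform \<open>i < m\<close> by (subst card_image) (auto simp: inj_on_def)
  then show ?thesis
    using n_subsets[OF fin, of 2] fin unfolding clique_edges_def by (simp add: numeral_eq_Suc)
qed

lemma incidence_edges_finite_card:
  assumes uniform: "\<forall>i<m. e i \<subseteq> {..<n} \<and> card (e i) = 3" and "i < m"
  shows "finite (incidence_edges e b i) \<and> card (incidence_edges e b i) \<le> 12"
proof -
  have fin: "finite (parity_subsets (e i) (b i) \<times> e i)"
    using finite_parity_subsets[OF finite_hyperedge[OF assms]] finite_hyperedge[OF assms] by simp
  have "card (parity_subsets (e i) (b i) \<times> e i) = 12"
    using card_parity_subsets uniform \<open>i < m\<close> by (simp add: card_cartesian_product)
  moreover have "card (incidence_edges e b i) \<le> card (parity_subsets (e i) (b i) \<times> e i)"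
    unfolding incidence_edges_def using fin by (rule card_image_le)
  ultimately show ?thesis using fin unfolding incidence_edges_def by simp
qed

lemma GC_E_finite_card_le:
  assumes uniform: "\<forall>i<m. e i \<subseteq> {..<n} \<and> card (e i) = 3"
  shows "finite (GC_E n m e b) \<and> card (GC_E n m e b) \<le> n + 18 * m"
proof -
  define A where "A = (\<lambda>x. {VarV x False, VarV x True}) ` {..<n}"
  define U where "U = A \<union> (\<Union>i<m. clique_edges e b i) \<union> (\<Union>i<m. incidence_edges e b i)"
  note B = clique_edges_finite_card[OF uniform] and C = incidence_edges_finite_card[OF uniform]
  have A: "finite A" "card A \<le> n" unfolding A_def using card_image_le[of "{..<n}"] by auto
  have "finite U" unfolding U_def using A B C by auto
  have "card U \<le> card (A \<union> (\<Union>i<m. clique_edges e b i)) + card (\<Union>i<m. incidence_edges e b i)"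
    unfolding U_def by (rule card_Un_le)
  also have "\<dots> \<le> card A + card (\<Union>i<m. clique_edges e b i) + card (\<Union>i<m. incidence_edges e b i)"
    using card_Un_le[of A "\<Union>i<m. clique_edges e b i"] by simp
  also have "\<dots> \<le> n + (\<Sum>i<m. card (clique_edges e b i)) + (\<Sum>i<m. card (incidence_edges e b i))"
    using A(2) by (intro add_mono card_UN_le) auto
  also have "\<dots> \<le> n + (\<Sum>i<m. 6) + (\<Sum>i<m. 12)"
    using B C by (intro add_mono sum_mono) auto
  finally have "card U \<le> n + 18 * m" by simp
  moreover have "GC_E n m e b \<subseteq> U" unfolding U_def A_def by (rule GC_E_subset)
  moreover from this \<open>finite U\<close> have "card (GC_E n m e b) \<le> card U" by (simp add: card_mono)
  ultimately show ?thesis using \<open>finite U\<close> finite_subset by auto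
qed

text \<open>Toggling one fixed variable of constraint i flips the parity of its local assignments.
  This is only needed to know that the maximum defining GI ranges over a nonempty set.\<close>

definition toggle_vertex :: "(nat \<Rightarrow> nat set) \<Rightarrow> (nat \<Rightarrow> bool) \<Rightarrow> vtx \<Rightarrow> vtx" where
  "toggle_vertex e d u = (case u of
     VarV x v \<Rightarrow> VarV x v
   | ConV i T \<Rightarrow> ConV i (if d i \<and> (SOME x. x \<in> e i) \<in> T then T - {SOME x. x \<in> e i}
                        else if d i then insert (SOME x. x \<in> e i) T else T))"

lemma toggle_vertex_involution: "toggle_vertex e d (toggle_vertex e d u) = u"
  unfolding toggle_vertex_def by (cases u) auto

lemma toggle_vertex_in_GC_V:
  assumes uniform: "\<forall>i<m. e i \<subseteq> {..<n} \<and> card (e i) = 3"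
    and u: "u \<in> GC_V n m e b" and b': "\<And>i. b' i = (b i \<noteq> d i)"
  shows "toggle_vertex e d u \<in> GC_V n m e b'"
proof (cases u)
  case (VarV x v)
  then show ?thesis using u unfolding GC_V_def toggle_vertex_def by auto
next
  case (ConV i T)
  then have i: "i < m" and T: "T \<subseteq> e i" "odd (card T) \<longleftrightarrow> b i"
    using u unfolding GC_V_def local_sat_def by auto
  define r where "r = (SOME x. x \<in> e i)"
  have "e i \<noteq> {}" using uniform i by auto
  then have r: "r \<in> e i" unfolding r_def by (simp add: some_in_eq)
  have fin: "finite T" using T(1) finite_hyperedge[OF uniform i] finite_subset by blast
  define T' where "T' = (if d i \<and> r \<in> T then T - {r} else if d i then insert r T else T)"
  have "T' \<subseteq> e i" using T r unfolding T'_def by auto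
  moreover have "odd (card T') \<longleftrightarrow> b' i"
  proof -
    consider "d i" "r \<in> T" | "d i" "r \<notin> T" | "\<not> d i" by blast
    then show ?thesis
    proof cases
      case 1
      then have "card T = Suc (card T')" using card_Suc_Diff1[OF fin] unfolding T'_def by simp
      then show ?thesis using T(2) b'[of i] 1 by auto
    next
      case 2
      then have "card T' = Suc (card T)" using fin unfolding T'_def by simp
      then show ?thesis using T(2) b'[of i] 2 by auto
    qed (use T(2) b'[of i] T'_def in auto)
  qed
  moreover have "toggle_vertex e d u = ConV i T'" unfolding ConV toggle_vertex_def T'_def r_def by simp
  ultimately show ?thesis using i unfolding GC_V_def local_sat_def by auto
qed

lemma GC_V_bij_betw:
  assumes "\<forall>i<m. e i \<subseteq> {..<n} \<and> card (e i) = 3"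
  shows "bij_betw (toggle_vertex e (\<lambda>i. b i \<noteq> b' i)) (GC_V n m e b) (GC_V n m e b')"
  by (rule bij_betw_byWitness[where f' = "toggle_vertex e (\<lambda>i. b i \<noteq> b' i)"])
    (auto simp: toggle_vertex_involution intro!: toggle_vertex_in_GC_V[OF assms])

lemma GI_witness:
  assumes "finite V1" "finite V2" "bij_betw \<sigma> V1 V2" "x \<le> GI V1 E1 V2 E2"
  obtains \<pi> where "bij_betw \<pi> V1 V2"
    "x \<le> real (card {ed \<in> E1. \<pi> ` ed \<in> E2}) / real (max (card E1) (card E2))"
proof -
  define Bij where "Bij = {\<pi> \<in> V1 \<rightarrow>\<^sub>E V2. bij_betw \<pi> V1 V2}"
  define F where "F \<pi> = real (card {ed \<in> E1. \<pi> ` ed \<in> E2}) / real (max (card E1) (card E2))"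
    for \<pi> :: "vtx \<Rightarrow> vtx"
  have "finite Bij" unfolding Bij_def using assms(1,2) by (simp add: finite_PiE)
  moreover have "restrict \<sigma> V1 \<in> Bij"
    using assms(3) unfolding Bij_def bij_betw_def by (auto simp: inj_on_def)
  moreover have "x \<le> Max (F ` Bij)"
    using assms(4) unfolding GI_def F_def Bij_def .
  ultimately obtain \<pi> where "\<pi> \<in> Bij" "x \<le> F \<pi>" by (subst (asm) Max_ge_iff) auto
  then show ?thesis using that unfolding Bij_def F_def by blast
qed

lemma card_unmapped_edges_le:
  assumes "finite E1"
    and "1 - \<delta> \<le> real (card {ed \<in> E1. \<pi> ` ed \<in> E2}) / real (max (card E1) (card E2))"
  shows "real (card {ed \<in> E1. \<pi> ` ed \<notin> E2}) \<le> \<delta> * real (max (card E1) (card E2))"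
proof -
  have "card {ed \<in> E1. \<pi> ` ed \<in> E2} + card {ed \<in> E1. \<pi> ` ed \<notin> E2} = card E1"
    using assms(1) by (subst card_Un_disjoint[symmetric]) (auto intro: arg_cong[where f = card])
  moreover have "card E1 \<le> max (card E1) (card E2)" by simp
  moreover have "(1 - \<delta>) * real (max (card E1) (card E2)) \<le> real (card {ed \<in> E1. \<pi> ` ed \<in> E2})"
    if "max (card E1) (card E2) > 0"
    using assms(2) that by (simp add: le_divide_eq)
  ultimately show ?thesis
    by (cases "max (card E1) (card E2) = 0") (auto simp: algebra_simps)
qed

lemma card_unpreserved_constraints_le:
  assumes "finite (GC_E n m e b)"
  shows "card {i \<in> {..<m}. \<not> constraint_preserved n m e b \<pi> i}
    \<le> card {ed \<in> GC_E n m e b. \<pi> ` ed \<notin> GC_E n m e (\<lambda>_. False)}"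
proof -
  define bad where "bad = {ed \<in> GC_E n m e b. \<pi> ` ed \<notin> GC_E n m e (\<lambda>_. False)}"
  define h where "h i = (SOME ed. ed \<in> bad \<and> (\<exists>T. ConV i T \<in> ed))" for i
  have h: "h i \<in> bad \<and> (\<exists>T. ConV i T \<in> h i)" if "\<not> constraint_preserved n m e b \<pi> i" for i
    unfolding h_def
    by (rule someI_ex) (use that in \<open>auto simp: bad_def constraint_preserved_def\<close>)
  have "inj_on h {i \<in> {..<m}. \<not> constraint_preserved n m e b \<pi> i}"
  proof
    fix i i' assume "i \<in> {i \<in> {..<m}. \<not> constraint_preserved n m e b \<pi> i}"
      "i' \<in> {i \<in> {..<m}. \<not> constraint_preserved n m e b \<pi> i}" "h i = h i'"
    with h obtain T T' where "h i \<in> GC_E n m e b" "ConV i T \<in> h i" "ConV i' T' \<in> h i"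
      unfolding bad_def by fastforce
    then show "i = i'" by (rule GC_E_ConV_same_constraint)
  qed
  then show ?thesis unfolding bad_def[symmetric]
    by (rule card_inj_on_le) (use h assms in \<open>auto simp: bad_def\<close>)
qed

lemma xor_val_ge_assignment:
  assumes "\<forall>i<m. e i \<subseteq> {..<n}"
  shows "real (card {i \<in> {..<m}. xor_sat e b a i}) / real m \<le> xor_val n m e b"
proof -
  have "xor_sat e b (restrict a {..<n}) i = xor_sat e b a i" if "i < m" for i
  proof -
    have "{j \<in> e i. restrict a {..<n} j} = {j \<in> e i. a j}" using assms that by auto
    then show ?thesis unfolding xor_sat_def by simp
  qed
  then have eq: "{i \<in> {..<m}. xor_sat e b (restrict a {..<n}) i} = {i \<in> {..<m}. xor_sat e b a i}"
    by auto
  have mem: "restrict a {..<n} \<in> {..<n} \<rightarrow>\<^sub>E (UNIV :: bool set)" by simp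
  show ?thesis unfolding xor_val_def
  proof (rule Max_ge)
    show "finite ((\<lambda>a. real (card {i \<in> {..<m}. xor_sat e b a i}) / real m) ` ({..<n} \<rightarrow>\<^sub>E (UNIV :: bool set)))"
      by (intro finite_imageI finite_PiE) auto
    show "real (card {i \<in> {..<m}. xor_sat e b a i}) / real m \<in>
        (\<lambda>a. real (card {i \<in> {..<m}. xor_sat e b a i}) / real m) ` ({..<n} \<rightarrow>\<^sub>E UNIV)"
      by (rule image_eqI[OF _ mem]) (simp only: eq)
  qed
qed

lemma xor_val_nonneg:
  assumes "\<forall>i<m. e i \<subseteq> {..<n}"
  shows "0 \<le> xor_val n m e b"
proof -
  have "0 \<le> real (card {i \<in> {..<m}. xor_sat e b (\<lambda>_. False) i}) / real m" by simp
  also have "\<dots> \<le> xor_val n m e b" by (rule xor_val_ge_assignment[OF assms])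
  finally show ?thesis .
qed

lemma card_satisfied_ge:
  assumes uniform: "\<forall>i<m. e i \<subseteq> {..<n} \<and> card (e i) = 3"
    and inj: "inj_on \<pi> (GC_V n m e b)"
  shows "real m - real (card {ed \<in> GC_E n m e b. \<pi> ` ed \<notin> GC_E n m e (\<lambda>_. False)})
    \<le> real (card {i \<in> {..<m}. xor_sat e b (\<lambda>j. var_value (\<pi> (VarV j False))) i})"
proof -
  define good where "good = {i \<in> {..<m}. constraint_preserved n m e b \<pi> i}"
  define bad where "bad = {i \<in> {..<m}. \<not> constraint_preserved n m e b \<pi> i}"
  have "card good \<le> card {i \<in> {..<m}. xor_sat e b (\<lambda>j. var_value (\<pi> (VarV j False))) i}"
    using preserved_constraint_satisfied[OF uniform inj]
    unfolding good_def by (intro card_mono) auto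
  moreover have "card good + card bad = m"
  proof -
    have "good \<union> bad = {..<m}" unfolding good_def bad_def by auto
    moreover have "card (good \<union> bad) = card good + card bad"
      by (rule card_Un_disjoint) (auto simp: good_def bad_def)
    ultimately show ?thesis by simp
  qed
  moreover have "card bad \<le> card {ed \<in> GC_E n m e b. \<pi> ` ed \<notin> GC_E n m e (\<lambda>_. False)}"
    unfolding bad_def
    by (rule card_unpreserved_constraints_le) (use GC_E_finite_card_le[OF uniform] in blast)
  ultimately show ?thesis by linarith
qed

lemma xor_val_ge_GI:
  assumes uniform: "\<forall>i<m. e i \<subseteq> {..<n} \<and> card (e i) = 3"
    and "0 < m" "0 \<le> \<delta>"
    and GI: "1 - \<delta> \<le> GI (GC_V n m e b) (GC_E n m e b) (GC_V n m e (\<lambda>_. False)) (GC_E n m e (\<lambda>_. False))"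
  shows "1 - \<delta> * (real n + 18 * real m) / real m \<le> xor_val n m e b"
proof -
  define E1 where "E1 = GC_E n m e b"
  define E2 where "E2 = GC_E n m e (\<lambda>_. False)"
  obtain \<pi> where \<pi>: "bij_betw \<pi> (GC_V n m e b) (GC_V n m e (\<lambda>_. False))"
    "1 - \<delta> \<le> real (card {ed \<in> E1. \<pi> ` ed \<in> E2}) / real (max (card E1) (card E2))"
    by (rule GI_witness[OF finite_GC_V[OF uniform] finite_GC_V[OF uniform] GC_V_bij_betw[OF uniform]
          GI[folded E1_def E2_def]])
  have E: "finite E1" "card E1 \<le> n + 18 * m" "card E2 \<le> n + 18 * m"
    using GC_E_finite_card_le[OF uniform] unfolding E1_def E2_def by auto
  have "real (card {ed \<in> E1. \<pi> ` ed \<notin> E2}) \<le> \<delta> * real (max (card E1) (card E2))"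
    using card_unmapped_edges_le[OF E(1) \<pi>(2)] .
  also have "\<dots> \<le> \<delta> * (real n + 18 * real m)"
    using E(2,3) \<open>0 \<le> \<delta>\<close> by (intro mult_left_mono) auto
  finally have sat: "real m - \<delta> * (real n + 18 * real m)
      \<le> real (card {i \<in> {..<m}. xor_sat e b (\<lambda>j. var_value (\<pi> (VarV j False))) i})"
    using card_satisfied_ge[OF uniform bij_betw_imp_inj_on[OF \<pi>(1)]]
    unfolding E1_def E2_def by linarith
  have "1 - \<delta> * (real n + 18 * real m) / real m = (real m - \<delta> * (real n + 18 * real m)) / real m"
    using \<open>0 < m\<close> by (simp add: diff_divide_distrib)
  also have "\<dots> \<le> real (card {i \<in> {..<m}. xor_sat e b (\<lambda>j. var_value (\<pi> (VarV j False))) i}) / real m"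
    using sat by (rule divide_right_mono) simp
  also have "\<dots> \<le> xor_val n m e b"
    using uniform by (intro xor_val_ge_assignment) auto
  finally show ?thesis .
qed

section \<open>Asymmetry forces few isolated vertices\<close>

lemma cycle_of_list_no_fixpoint:
  assumes "distinct cs" "2 \<le> length cs" "x \<in> set cs"
  shows "cycle_of_list cs x \<noteq> x"
proof
  assume fixed: "cycle_of_list cs x = x"
  obtain k where k: "k < length cs" "cs ! k = x" using assms(3) by (metis in_set_conv_nth)
  have "map (cycle_of_list cs) cs = rotate1 cs"
    using cyclic_rotation[OF assms(1), of 1] by simp
  then have "cycle_of_list cs (cs ! k) = cs ! (Suc k mod length cs)"
    using k(1) by (metis nth_map length_rotate1 nth_rotate1)
  with fixed k have "cs ! (Suc k mod length cs) = cs ! k" by simp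
  moreover have "Suc k mod length cs < length cs" using k(1) by (intro mod_less_divisor) auto
  ultimately have "Suc k mod length cs = k"
    using nth_eq_iff_index_eq[OF assms(1)] k(1) by blast
  then show False
  proof (cases "Suc k < length cs")
    case False
    with k(1) have "Suc k = length cs" by simp
    with \<open>Suc k mod length cs = k\<close> assms(2) show False by simp
  qed simp
qed

text \<open>Cycling the isolated vertices is an automorphism fixing exactly the covered vertices.\<close>

lemma asymmetric_covered_vertices:
  fixes V :: "nat set" and E :: "nat set set"
  assumes asym: "asymmetric V E \<beta> \<gamma>" and "0 \<le> \<gamma>" "finite V" "\<Union>E \<subseteq> V" "E \<noteq> {}"
    and isolated: "2 \<le> card (V - \<Union>E)"
  shows "(1 - \<beta>) * real (card V) < real (card (\<Union>E))"
proof -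
  obtain cs where cs: "set cs = V - \<Union>E" "distinct cs"
    using finite_distinct_list[of "V - \<Union>E"] \<open>finite V\<close> by blast
  define p where "p = cycle_of_list cs"
  have "p permutes V"
    unfolding p_def using cycle_permutes[of cs] cs(1) permutes_subset by blast
  have "length cs \<ge> 2" using isolated distinct_card[OF cs(2)] cs(1) by simp
  then have "{x \<in> V. p x = x} = \<Union>E"
    using cycle_of_list_no_fixpoint[OF cs(2)] id_outside_supp[of _ cs] cs(1) \<open>\<Union>E \<subseteq> V\<close>
    unfolding p_def by blast
  have "p ` ed = ed" if "ed \<in> E" for ed
  proof -
    have "p x = x" if "x \<in> ed" for x
      using id_outside_supp[of x cs] cs(1) \<open>ed \<in> E\<close> that unfolding p_def by blast
    then show ?thesis by (simp add: image_cong)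
  qed
  then have "{ed \<in> E. p ` ed \<in> E} = E" by auto
  moreover have "finite E"
    using \<open>finite V\<close> \<open>\<Union>E \<subseteq> V\<close> by (meson Sup_le_iff finite_Pow_iff finite_subset subset_Pow_Union)
  ultimately have "AUT E p = 1" unfolding AUT_def using \<open>E \<noteq> {}\<close> by simp
  with asym \<open>p permutes V\<close> \<open>0 \<le> \<gamma>\<close> have "\<not> real (card {x \<in> V. p x = x}) \<le> (1 - \<beta>) * real (card V)"
    unfolding asymmetric_def by force
  with \<open>{x \<in> V. p x = x} = \<Union>E\<close> show ?thesis by simp
qed

lemma asymmetric_vertices_le:
  assumes uniform: "\<forall>i<m. e i \<subseteq> {..<n} \<and> card (e i) = 3"
    and "0 < m" "asymmetric {..<n} (e ` {..<m}) \<beta> \<gamma>" "0 \<le> \<gamma>" "\<beta> \<le> 1/4"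
  shows "real n \<le> 4 * real m"
proof -
  define U where "U = \<Union>(e ` {..<m})"
  have "card U \<le> (\<Sum>i<m. card (e i))" unfolding U_def by (rule card_UN_le) simp
  also have "\<dots> = 3 * m" using uniform by simp
  finally have U: "card U \<le> 3 * m" .
  have "U \<subseteq> {..<n}" using uniform unfolding U_def by auto
  then have n: "n = card U + card ({..<n} - U)"
    by (metis card_Diff_subset card_lessThan card_mono finite_lessThan finite_subset le_add_diff_inverse)
  show ?thesis
  proof (cases "2 \<le> card ({..<n} - U)")
    case True
    have "(1 - \<beta>) * real n < real (card U)"
      using asymmetric_covered_vertices[OF assms(3,4)] True \<open>U \<subseteq> {..<n}\<close> \<open>0 < m\<close>
      unfolding U_def by auto
    moreover have "3/4 * real n \<le> (1 - \<beta>) * real n" using \<open>\<beta> \<le> 1/4\<close> by (intro mult_right_mono) auto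
    ultimately show ?thesis using U by linarith
  next
    case False
    then show ?thesis using n U \<open>0 < m\<close> by linarith
  qed
qed

lemma unsatisfied_fraction_le:
  fixes m n :: nat and c \<epsilon> \<delta> :: real
  assumes "0 < m" "real m = c * real n" "real n \<le> 4 * real m" "0 < \<epsilon>"
    and "0 \<le> \<delta>" "\<delta> \<le> 1/200" "\<delta> \<le> \<epsilon> / (95 * c)"
  shows "\<delta> * (real n + 18 * real m) / real m \<le> 100 * \<epsilon> + 9/100"
proof -
  have "0 < real n" "0 < c"
    using assms(1,2) zero_less_mult_iff[of c "real n"] by auto
  have "\<delta> * real n \<le> \<epsilon> / (95 * c) * real n"
    using assms(7) \<open>0 < real n\<close> by (intro mult_right_mono) auto
  also have "\<dots> = \<epsilon> * real n * real n / (95 * real m)"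
    using assms(2) \<open>0 < c\<close> by (simp add: field_simps)
  also have "\<dots> \<le> \<epsilon> * (16 * real m * real m) / (95 * real m)"
    using assms(3,4) \<open>0 < real n\<close>
    by (intro divide_right_mono mult_left_mono) (auto intro: order_trans[OF mult_mono])
  also have "\<dots> \<le> 100 * \<epsilon> * real m"
    using assms(1,4) by (simp add: field_simps)
  moreover have "\<delta> * (18 * real m) \<le> 1/200 * (18 * real m)"
    using assms(6) by (intro mult_right_mono) auto
  ultimately have "\<delta> * (real n + 18 * real m) \<le> (100 * \<epsilon> + 9/100) * real m"
    by (simp add: algebra_simps)
  then show ?thesis using \<open>0 < m\<close> by (simp add: divide_le_eq)
qed

theorem lemma5p2:
  fixes n m :: nat and e :: "nat \<Rightarrow> nat set" and b :: "nat \<Rightarrow> bool"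
    and c \<epsilon> \<beta> \<gamma> :: real
  assumes uniform: "\<forall>i<m. e i \<subseteq> {..<n} \<and> card (e i) = 3"
    and distinct_edges: "inj_on e {..<m}"
    and m_pos: "0 < m"
    and m_eq: "real m = c * real n"
    and eps_pos: "0 < \<epsilon>" and beta_pos: "0 < \<beta>" and gamma_pos: "0 < \<gamma>"
    and deg: "degree_bounded {..<n} (e ` {..<m}) \<epsilon> (100 * c)"
    and asym: "asymmetric {..<n} (e ` {..<m}) \<beta> \<gamma>"
    and gamma_ge: "\<gamma> \<ge> 200 * \<epsilon>"
    and GI_ge: "GI (GC_V n m e b) (GC_E n m e b) (GC_V n m e (\<lambda>_. False)) (GC_E n m e (\<lambda>_. False))
                  \<ge> 1 - min (1/200) (min (\<gamma>/48) (\<epsilon> / (95 * c)))"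
  shows "xor_val n m e b \<ge> 0.9 - 100 * (\<epsilon> + \<beta>)"
proof -
  define \<delta> where "\<delta> = min (1/200) (min (\<gamma>/48) (\<epsilon> / (95 * c)))"
  have "0 < c" using m_pos m_eq zero_less_mult_iff[of c "real n"] by auto
  then have \<delta>: "0 \<le> \<delta>" "\<delta> \<le> 1/200" "\<delta> \<le> \<epsilon> / (95 * c)"
    unfolding \<delta>_def using eps_pos gamma_pos by auto
  have val: "1 - \<delta> * (real n + 18 * real m) / real m \<le> xor_val n m e b"
    using xor_val_ge_GI[OF uniform m_pos \<delta>(1)] GI_ge unfolding \<delta>_def by blast
  show ?thesis
  proof (cases "\<beta> \<le> 9/1000")
    case True
    then have "real n \<le> 4 * real m"
      using asymmetric_vertices_le[OF uniform m_pos asym] gamma_pos by simp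
    have "0.9 - 100 * (\<epsilon> + \<beta>) \<le> 1 - (100 * \<epsilon> + 9/100)" using beta_pos by simp
    also have "\<dots> \<le> 1 - \<delta> * (real n + 18 * real m) / real m"
      using unsatisfied_fraction_le[OF m_pos m_eq \<open>real n \<le> 4 * real m\<close> eps_pos \<delta>] by simp
    also have "\<dots> \<le> xor_val n m e b" by (rule val)
    finally show ?thesis .
  next
    case False
    then have "0.9 - 100 * (\<epsilon> + \<beta>) \<le> 0" using eps_pos by simp
    also have "\<dots> \<le> xor_val n m e b" using uniform by (intro xor_val_nonneg) auto
    finally show ?thesis .
  qed
qed

end
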